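(* Let $q$ be a prime power, let $h(x)\in\mathbb{F}_{q^6}[x]$, let $L(x)=\sum_i a_i x^{q^i}$ be a $q$-polynomial with all $a_i\in\mathbb{F}_q$, and let $\delta\in\mathbb{F}_{q^6}$. Write $w(x)=x^{q^2}+x^q+x+\delta$. Then the polynomial $$f(x)=h(w(x))^{q^4}-h(w(x))^{q^3}+h(w(x))^{q}-h(w(x))+L(x)$$ permutes $\mathbb{F}_{q^6}$ if and only if $L(x)$ permutes $\mathbb{F}_{q^6}$.
   Context: A polynomial permutes $\mathbb{F}_{q^6}$ if it induces a bijection of $\mathbb{F}_{q^6}$. *)

theory Defs
  imports "HOL-Computational_Algebra.Polynomial" "HOL-Computational_Algebra.Primes"
begin

definition qpoly :: "nat \<Rightarrow> nat \<Rightarrow> (nat \<Rightarrow> 'a::field) \<Rightarrow> 'a \<Rightarrow> 'a" where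
  "qpoly q n a x = (\<Sum>i<n. a i * x ^ (q ^ i))"

definition permutes_field :: "('a \<Rightarrow> 'a) \<Rightarrow> bool" where
  "permutes_field f \<longleftrightarrow> bij f"

end

theory Submission
  imports Defs "HOL-Number_Theory.Residues"
begin

text \<open>Put \<open>\<psi> x = x^(q^2) + x^q + x\<close>. As \<open>y^(q^6) = y\<close>, \<open>\<psi>\<close> kills every value
  \<open>y^(q^4) - y^(q^3) + y^q - y\<close> (the three Frobenius shifts telescope), and since \<open>L\<close> has
  coefficients in \<open>\<FF>\<^sub>q\<close> it is additive and commutes with \<open>\<psi>\<close>. Hence \<open>f = g \<circ> \<psi> + L\<close> with
  \<open>\<psi> \<circ> f = L \<circ> \<psi>\<close>. If \<open>L\<close> is injective, \<open>f x = f y\<close> forces \<open>\<psi> x = \<psi> y\<close> and then \<open>L x = L y\<close>.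
  Conversely, if \<open>f\<close> is bijective then \<open>L\<close> permutes the image of \<open>\<psi>\<close>; for \<open>L z = 0\<close> this gives
  \<open>\<psi> z = 0\<close>, hence \<open>f z = f 0\<close> and \<open>z = 0\<close>.\<close>

lemma finite_field_power_card:
  fixes x :: "'a::{finite,field}"
  shows "x ^ card (UNIV :: 'a set) = x"
proof (cases "x = 0")
  case False
  \<comment> \<open>multiplication by \<open>x\<close> permutes the nonzero elements\<close>
  have "x * (\<Prod>y\<in>UNIV-{0}. x * y) = x * x ^ (card (UNIV :: 'a set) - 1) * \<Prod>(UNIV-{0})"
    by (simp add: prod.distrib mult_ac)
  also have "x * x ^ (card (UNIV :: 'a set) - 1) = x ^ card (UNIV :: 'a set)"
    using finite_UNIV_card_ge_0[where ?'a = 'a] by (simp flip: power_Suc)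
  also have "(\<Prod>y\<in>UNIV-{0}. x * y) = (\<Prod>y\<in>UNIV-{0}. y)"
    by (rule prod.reindex_bij_witness[of _ "\<lambda>y. y / x" "\<lambda>y. x * y"]) (use False in auto)
  finally show ?thesis
    by simp
qed (use finite_UNIV_card_ge_0[where ?'a = 'a] in auto)

lemma CHAR_eq_if_card_prime_power:
  assumes "prime p" and "card (UNIV :: 'a::{finite,field} set) = p ^ m"
  shows "CHAR('a) = p"
proof -
  have "prime CHAR('a)"
    by (rule prime_CHAR_semidom) (simp add: finite_imp_CHAR_pos)
  moreover have "CHAR('a) dvd p ^ m"
    using CHAR_dvd_CARD[where 'a = 'a] assms(2) by simp
  ultimately show ?thesis
    using assms(1) prime_dvd_power primes_dvd_imp_eq by blast
qed

lemma frobenius_power_add: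
  assumes "prime CHAR('a::comm_ring_1)" and "q = CHAR('a) ^ k"
  shows "(x + y :: 'a) ^ (q ^ i) = x ^ (q ^ i) + y ^ (q ^ i)"
proof -
  have "q ^ i = CHAR('a) ^ (k * i)"
    using assms(2) by (simp add: power_mult)
  then show ?thesis
    by (rule freshmans_dream'[OF assms(1)])
qed

lemma frobenius_power_diff:
  assumes "prime CHAR('a::comm_ring_1)" and "q = CHAR('a) ^ k"
  shows "(x - y :: 'a) ^ (q ^ i) = x ^ (q ^ i) - y ^ (q ^ i)"
  using frobenius_power_add[OF assms, of "x - y" y i] by (simp add: algebra_simps)

lemma additive_qpoly:
  assumes "prime CHAR('a::field)" and "q = CHAR('a) ^ k"
  shows "additive (qpoly q n (a :: nat \<Rightarrow> 'a))"
  by standard (simp add: qpoly_def frobenius_power_add[OF assms] distrib_left sum.distrib)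

lemma qpoly_frobenius_commute:
  fixes a :: "nat \<Rightarrow> 'a::field"
  assumes "prime CHAR('a)" and "q = CHAR('a) ^ k" and "\<forall>i<n. a i ^ q = a i"
  shows "qpoly q n a (x ^ q) = qpoly q n a x ^ q"
proof -
  have "qpoly q n a x ^ q = (\<Sum>i<n. (a i * x ^ (q ^ i)) ^ q)"
    unfolding qpoly_def by (rule freshmans_dream_sum'[OF assms(1,2)])
  also have "\<dots> = (\<Sum>i<n. a i * (x ^ q) ^ (q ^ i))"
    using assms(3) by (intro sum.cong) (simp_all add: power_mult_distrib mult.commute flip: power_mult)
  finally show ?thesis
    by (simp add: qpoly_def)
qed

lemma frobenius_telescope:
  fixes y :: "'a::comm_ring_1"
  assumes "prime CHAR('a)" and "q = CHAR('a) ^ k" and "y ^ (q ^ 6) = y"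
  defines "t \<equiv> y ^ (q ^ 4) - y ^ (q ^ 3) + y ^ q - y"
  shows "t ^ (q ^ 2) + t ^ q + t = 0"
proof -
  note power_simps = frobenius_power_add[OF assms(1,2)] frobenius_power_diff[OF assms(1,2)]
  have iter: "\<And>i j. (y ^ (q ^ i)) ^ (q ^ j) = y ^ (q ^ (i + j))"
    by (simp add: power_add power_mult)
  have t_alt: "t = y ^ (q ^ 4) - y ^ (q ^ 3) + y ^ (q ^ 1) - y ^ (q ^ 0)"
    by (simp add: t_def)
  have "t ^ (q ^ 2) + t ^ (q ^ 1) + t ^ (q ^ 0) = y ^ (q ^ 6) - y ^ (q ^ 0)"
    unfolding t_alt by (simp only: power_simps iter) (simp add: algebra_simps power3_eq_cube)
  then show ?thesis
    using assms(3) by simp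
qed

lemma bij_additive_perturbation_iff:
  fixes L \<psi> g :: "'a::{finite,ab_group_add} \<Rightarrow> 'a"
  assumes "additive L" and "additive \<psi>"
    and commute: "\<And>x. \<psi> (L x) = L (\<psi> x)"
    and annihilate: "\<And>y. \<psi> (g y) = 0"
  shows "bij (\<lambda>x. g (\<psi> x) + L x) \<longleftrightarrow> bij L"
proof -
  interpret L: additive L by fact
  interpret \<psi>: additive \<psi> by fact
  define f where "f = (\<lambda>x. g (\<psi> x) + L x)"
  have \<psi>_f: "\<psi> (f x) = L (\<psi> x)" for x
    by (simp add: f_def \<psi>.add annihilate commute)
  have "inj f \<longleftrightarrow> inj L"
  proof
    assume "inj f"
    then have "range f = UNIV"
      by (simp add: finite_UNIV_inj_surj)
    have "L ` range \<psi> = \<psi> ` range f"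
      by (simp add: image_image \<psi>_f)
    also have "\<dots> = range \<psi>"
      using \<open>range f = UNIV\<close> by simp
    finally have "L ` range \<psi> = range \<psi>" .
    then have "inj_on L (range \<psi>)"
      by (simp add: eq_card_imp_inj_on)
    have kernel: "z = 0" if "L z = 0" for z
    proof -
      have "L (\<psi> z) = L (\<psi> 0)"
        by (simp flip: commute add: that \<psi>.zero L.zero)
      then have "\<psi> z = 0"
        using \<open>inj_on L (range \<psi>)\<close> \<psi>.zero by (auto dest: inj_onD)
      then have "f z = f 0"
        by (simp add: f_def that \<psi>.zero L.zero)
      then show "z = 0"
        using \<open>inj f\<close> by (simp add: inj_eq)
    qed
    show "inj L"
    proof (rule injI)
      fix x y
      assume "L x = L y"
      then have "L (x - y) = 0"
        by (simp add: L.diff)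
      then show "x = y"
        using kernel by fastforce
    qed
  next
    assume "inj L"
    show "inj f"
    proof (rule injI)
      fix x y
      assume "f x = f y"
      then have "L (\<psi> x) = L (\<psi> y)"
        by (simp flip: \<psi>_f)
      then have "\<psi> x = \<psi> y"
        using \<open>inj L\<close> by (simp add: inj_eq)
      with \<open>f x = f y\<close> have "L x = L y"
        by (simp add: f_def)
      then show "x = y"
        using \<open>inj L\<close> by (simp add: inj_eq)
    qed
  qed
  moreover have "bij h \<longleftrightarrow> inj h" for h :: "'a \<Rightarrow> 'a"
    by (auto simp: bij_def finite_UNIV_inj_surj)
  ultimately show ?thesis
    by (simp add: f_def)
qed

theorem mainTheorem10:
  fixes q p k n :: nat
    and h :: "'a::{finite,field} poly"
    and a :: "nat \<Rightarrow> 'a"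
    and \<delta> :: 'a
  assumes "prime p" and "k \<ge> 1" and "q = p ^ k"
    and "card (UNIV :: 'a set) = q ^ 6"
    and "\<forall>i<n. a i ^ q = a i"
  shows "permutes_field
           (\<lambda>x. let w = x ^ (q^2) + x ^ q + x + \<delta>; y = poly h w
                in y ^ (q^4) - y ^ (q^3) + y ^ q - y + qpoly q n a x)
         \<longleftrightarrow> permutes_field (qpoly q n a)"
proof -
  have "CHAR('a) = p"
    using CHAR_eq_if_card_prime_power[OF assms(1), of "k * 6"] assms(3,4) by (simp add: power_mult)
  then have char: "prime CHAR('a)" "q = CHAR('a) ^ k"
    using assms(1,3) by simp_all
  note frob_add = frobenius_power_add[OF char]
  have frob_order: "y ^ (q ^ 6) = y" for y :: 'a
    using finite_field_power_card[of y] assms(4) by simp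
  define L where "L = qpoly q n a"
  define \<psi> where "\<psi> = (\<lambda>x::'a. x ^ (q ^ 2) + x ^ q + x)"
  define g where "g = (\<lambda>w. let y = poly h (w + \<delta>) in y ^ (q ^ 4) - y ^ (q ^ 3) + y ^ q - y)"
  have "additive L"
    unfolding L_def using char by (rule additive_qpoly)
  have "additive \<psi>"
    by standard (simp add: \<psi>_def frob_add frob_add[of _ _ 1, simplified])
  have "\<psi> (L x) = L (\<psi> x)" for x
    using qpoly_frobenius_commute[OF char assms(5)] additive.add[OF \<open>additive L\<close>]
    by (simp add: L_def \<psi>_def power2_eq_square power_mult)
  moreover have "\<psi> (g w) = 0" for w
    using frobenius_telescope[OF char frob_order] by (simp add: \<psi>_def g_def Let_def)
  moreover have "(\<lambda>x. let w = x ^ (q^2) + x ^ q + x + \<delta>; y = poly h w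
                in y ^ (q^4) - y ^ (q^3) + y ^ q - y + qpoly q n a x) = (\<lambda>x. g (\<psi> x) + L x)"
    by (simp add: L_def g_def \<psi>_def Let_def add.assoc)
  ultimately show ?thesis
    using bij_additive_perturbation_iff[OF \<open>additive L\<close> \<open>additive \<psi>\<close>]
    by (simp add: permutes_field_def L_def)
qed

end
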